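(* There is an absolute constant $C$ such that for every anticommuting family $e_1,\dots,e_k\in\mathbb{C}^{n\times n}$ we have $\sum_{i=1}^k \mathrm{rk}(e_i^2)\le Cn^2$.
   Context: A family $e_1,\dots,e_k$ of complex $n\times n$ matrices is called anticommuting if $e_ie_j=-e_je_i$ for all distinct $i,j\in\{1,\dots,k\}$. $\mathrm{rk}$ denotes matrix rank. *)

theory Defs
  imports "Jordan_Normal_Form.DL_Rank"
begin

(* The family e_1..e_k is represented as e 0, ..., e (k-1), each an n x n complex matrix. *)
definition anticommuting :: "nat \<Rightarrow> nat \<Rightarrow> (nat \<Rightarrow> complex mat) \<Rightarrow> bool" where
  "anticommuting n k e \<longleftrightarrow>
     (\<forall>i<k. e i \<in> carrier_mat n n) \<and>
     (\<forall>i<k. \<forall>j<k. i \<noteq> j \<longrightarrow> e i * e j = - (e j * e i))"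

end

theory Submission
  imports Defs
begin

text \<open>
  The rank of a matrix is at most the number of its nonzero columns, so it suffices to show that
  for every column index q at most 2n of the squares e_i^2 have a nonzero q-th column.
  Fix q, let u be the q-th unit vector, and choose w with w^T e_i^2 u \<noteq> 0 for all such i
  (w = (1, t, ..., t^(n-1)) for t avoiding the roots of finitely many nonzero polynomials).
  In C^(2n) the vectors x_i = (e_i^T w, e_i u) and y_i = (e_i u, e_i^T w) satisfy
  x_i \<bullet> y_j = w^T (e_i e_j + e_j e_i) u, which vanishes for i \<noteq> j by anticommutation and
  equals 2 w^T e_i^2 u \<noteq> 0 for i = j. Such a biorthogonal system is linearly independent,
  hence has at most 2n members.
\<close>

lemma finite_family_common_nonroot:
  fixes p :: "'i \<Rightarrow> 'a::{idom,ring_char_0} poly"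
  assumes "finite I" and "\<And>i. i \<in> I \<Longrightarrow> p i \<noteq> 0"
  shows "\<exists>x. \<forall>i\<in>I. poly (p i) x \<noteq> 0"
proof -
  have "finite (\<Union>i\<in>I. {x. poly (p i) x = 0})"
    using assms poly_roots_finite by blast
  then obtain x where "x \<notin> (\<Union>i\<in>I. {x. poly (p i) x = 0})"
    using ex_new_if_finite[OF infinite_UNIV_char_0] by blast
  then show ?thesis by blast
qed

lemma exists_scalar_prod_nonzero:
  fixes v :: "'i \<Rightarrow> 'a::{idom,ring_char_0} vec"
  assumes "finite I"
    and carrier: "\<And>i. i \<in> I \<Longrightarrow> v i \<in> carrier_vec n"
    and nonzero: "\<And>i. i \<in> I \<Longrightarrow> v i \<noteq> 0\<^sub>v n"
  shows "\<exists>w \<in> carrier_vec n. \<forall>i\<in>I. w \<bullet> v i \<noteq> 0"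
proof -
  define p where "p i = (\<Sum>r<n. monom (v i $ r) r)" for i
  have coeff_p: "coeff (p i) r = (if r < n then v i $ r else 0)" for i r
    by (simp add: p_def coeff_sum coeff_monom)
  have "p i \<noteq> 0" if "i \<in> I" for i
  proof
    assume "p i = 0"
    then have "v i $ r = 0" if "r < n" for r
      using coeff_p[of i r] that by simp
    then show False
      using nonzero[OF \<open>i \<in> I\<close>] carrier[OF \<open>i \<in> I\<close>] by (auto intro: eq_vecI)
  qed
  then obtain t where t: "\<forall>i\<in>I. poly (p i) t \<noteq> 0"
    using finite_family_common_nonroot[OF \<open>finite I\<close>] by blast
  have "poly (p i) t = vec n (\<lambda>r. t ^ r) \<bullet> v i" if "i \<in> I" for i
    using carrier[OF that]
    by (auto simp: p_def poly_sum poly_monom scalar_prod_def lessThan_atLeast0 mult.commute)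
  with t show ?thesis by (metis vec_carrier)
qed

lemma (in vec_space) card_le_dim_if_biorthogonal:
  fixes x y :: "'i \<Rightarrow> 'a vec"
  assumes carrier: "\<And>i. i \<in> S \<Longrightarrow> x i \<in> carrier_vec n" "\<And>i. i \<in> S \<Longrightarrow> y i \<in> carrier_vec n"
    and orth: "\<And>i j. i \<in> S \<Longrightarrow> j \<in> S \<Longrightarrow> i \<noteq> j \<Longrightarrow> x i \<bullet> y j = 0"
    and diag: "\<And>i. i \<in> S \<Longrightarrow> x i \<bullet> y i \<noteq> 0"
  shows "card S \<le> n"
proof -
  have inj: "inj_on x S"
  proof (rule inj_onI, rule ccontr)
    fix i j assume "i \<in> S" "j \<in> S" "x i = x j" "i \<noteq> j"
    then show False using orth[of j i] diag[of i] by simp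
  qed
  have "lin_indpt (x ` S)"
  proof
    assume "lin_dep (x ` S)"
    then obtain A a u where A: "finite A" "A \<subseteq> x ` S" and comb: "lincomb a A = 0\<^sub>v n"
      and u: "u \<in> A" "a u \<noteq> 0"
      unfolding lin_dep_def by blast
    then obtain i where i: "i \<in> S" "u = x i" by blast
    have A_carrier: "A \<subseteq> carrier_vec n" using A(2) carrier(1) by blast
    have y: "y i \<in> carrier_vec n" using carrier(2)[OF i(1)] .
    have "0 = lincomb a A \<bullet> y i"
      unfolding comb using y by simp
    also have "\<dots> = (\<Sum>v\<in>A. (a v \<cdot>\<^sub>v v) \<bullet> y i)"
      unfolding lincomb_def by (rule finsum_scalar_prod_sum) (use A_carrier y in auto)
    also have "\<dots> = (\<Sum>v\<in>A. a v * (v \<bullet> y i))"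
      by (rule sum.cong[OF refl], rule smult_scalar_prod_distrib) (use A_carrier y in auto)
    also have "\<dots> = a u * (u \<bullet> y i) + (\<Sum>v\<in>A - {u}. a v * (v \<bullet> y i))"
      using A(1) u(1) by (rule sum.remove)
    also have "(\<Sum>v\<in>A - {u}. a v * (v \<bullet> y i)) = 0"
    proof (rule sum.neutral, rule ballI)
      fix v assume "v \<in> A - {u}"
      with A(2) i obtain j where "j \<in> S" "v = x j" "j \<noteq> i" by blast
      then show "a v * (v \<bullet> y i) = 0" using orth[of j i] i(1) by simp
    qed
    finally have "a u * (x i \<bullet> y i) = 0" using i(2) by simp
    then show False using u(2) diag[OF i(1)] by simp
  qed
  moreover have "x ` S \<subseteq> carrier_vec n" using carrier(1) by blast
  ultimately have "card (x ` S) \<le> n"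
    using li_le_dim(2)[OF fin_dim] dim_is_n by simp
  then show ?thesis using card_image[OF inj] by simp
qed

lemma (in vec_space) rank_le_card_nonzero_cols:
  assumes A: "A \<in> carrier_mat n nc"
  shows "rank A \<le> card {q. q < nc \<and> col A q \<noteq> 0\<^sub>v n}" (is "_ \<le> card ?Z")
proof -
  obtain S where S: "maximal S (\<lambda>T. T \<subseteq> set (cols A) \<and> lin_indpt T)"
    using maximal_exists[of "\<lambda>T. T \<subseteq> set (cols A) \<and> lin_indpt T" "card (set (cols A))" "{}"]
    by (meson List.finite_set card_mono empty_iff empty_subsetI finite_lin_indpt2 rev_finite_subset)
  then have "S \<subseteq> set (cols A)" "lin_indpt S" by (auto simp: maximal_def)
  moreover have "set (cols A) \<subseteq> carrier_vec n" using A cols_dim by blast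
  moreover have "(UNIV :: 'a set) \<noteq> {0}" by (metis UNIV_I singletonD zero_neq_one)
  ultimately have "0\<^sub>v n \<notin> S"
    using zero_nin_lin_indpt[of S] by auto
  have "S \<subseteq> col A ` ?Z"
  proof
    fix v assume "v \<in> S"
    then obtain q where "q < dim_col A" "v = col A q"
      using \<open>S \<subseteq> set (cols A)\<close> by (metis cols_length cols_nth in_set_conv_nth subsetD)
    with \<open>v \<in> S\<close> \<open>0\<^sub>v n \<notin> S\<close> show "v \<in> col A ` ?Z" using A by auto
  qed
  moreover have "finite ?Z" by (rule finite_subset[of _ "{..<nc}"]) auto
  ultimately have "card S \<le> card (col A ` ?Z)" by (intro card_mono finite_imageI)
  also have "\<dots> \<le> card ?Z" using \<open>finite ?Z\<close> by (rule card_image_le)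
  finally show ?thesis unfolding rank_card_indpt[OF A S] .
qed

lemma sum_card_filter_swap:
  fixes P :: "nat \<Rightarrow> nat \<Rightarrow> bool"
  shows "(\<Sum>i<k. card {q. q < n \<and> P i q}) = (\<Sum>q<n. card {i. i < k \<and> P i q})"
proof -
  have card_as_sum: "card {j. j < m \<and> Q j} = (\<Sum>j<m. of_bool (Q j))" for m and Q :: "nat \<Rightarrow> bool"
    by (simp add: Int_def lessThan_def conj_commute)
  show ?thesis
    unfolding card_as_sum by (rule sum.swap)
qed

lemma scalar_prod_anticommutator_pairing:
  fixes A B :: "'a::comm_ring_1 mat"
  assumes A: "A \<in> carrier_mat n n" and B: "B \<in> carrier_mat n n"
    and w: "w \<in> carrier_vec n" and q: "q < n"
  shows "((transpose_mat A *\<^sub>v w) @\<^sub>v col A q) \<bullet> (col B q @\<^sub>v (transpose_mat B *\<^sub>v w))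
    = w \<bullet> col (A * B + B * A) q"
proof -
  have "((transpose_mat A *\<^sub>v w) @\<^sub>v col A q) \<bullet> (col B q @\<^sub>v (transpose_mat B *\<^sub>v w))
      = (transpose_mat A *\<^sub>v w) \<bullet> col B q + col A q \<bullet> (transpose_mat B *\<^sub>v w)"
    by (rule scalar_prod_append[of _ n _ n]) (use A B w q in auto)
  also have "col A q \<bullet> (transpose_mat B *\<^sub>v w) = (transpose_mat B *\<^sub>v w) \<bullet> col A q"
    by (rule comm_scalar_prod[of _ n]) (use A B w q in auto)
  also have "(transpose_mat A *\<^sub>v w) \<bullet> col B q = w \<bullet> (A *\<^sub>v col B q)"
    by (rule transpose_vec_mult_scalar[OF A]) (use B w q in auto)
  also have "(transpose_mat B *\<^sub>v w) \<bullet> col A q = w \<bullet> (B *\<^sub>v col A q)"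
    by (rule transpose_vec_mult_scalar[OF B]) (use A w q in auto)
  also have "w \<bullet> (A *\<^sub>v col B q) + w \<bullet> (B *\<^sub>v col A q) = w \<bullet> (A *\<^sub>v col B q + B *\<^sub>v col A q)"
    by (rule scalar_prod_add_distrib[symmetric, of _ n]) (use A B w q in auto)
  also have "A *\<^sub>v col B q + B *\<^sub>v col A q = col (A * B + B * A) q"
    using col_add[OF mult_carrier_mat[OF A B] mult_carrier_mat[OF B A] q]
      col_mult2[OF A B q] col_mult2[OF B A q] by (simp only:)
  finally show ?thesis .
qed

lemma anticommutingD:
  assumes "anticommuting n k e"
  shows anticommuting_carrier: "i < k \<Longrightarrow> e i \<in> carrier_mat n n"
    and anticommuting_swap: "i < k \<Longrightarrow> j < k \<Longrightarrow> i \<noteq> j \<Longrightarrow> e i * e j = - (e j * e i)"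
  using assms unfolding anticommuting_def by blast+

lemma anticommuting_card_nonzero_col_square_le:
  assumes ac: "anticommuting n k e" and q: "q < n"
  shows "card {i. i < k \<and> col (e i * e i) q \<noteq> 0\<^sub>v n} \<le> 2 * n" (is "card ?I \<le> _")
proof -
  note e = anticommuting_carrier[OF ac] and anti = anticommuting_swap[OF ac]
  have sq_col: "col (e i * e i) q \<in> carrier_vec n" if "i < k" for i
    by (rule col_carrier_vec[OF q mult_carrier_mat[OF e[OF that] e[OF that]]])
  have "\<exists>w \<in> carrier_vec n. \<forall>i\<in>?I. w \<bullet> col (e i * e i) q \<noteq> 0"
    by (rule exists_scalar_prod_nonzero) (use sq_col in auto)
  then obtain w where w: "w \<in> carrier_vec n"
    and w_nz: "\<And>i. i \<in> ?I \<Longrightarrow> w \<bullet> col (e i * e i) q \<noteq> 0"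
    by blast
  define x where "x i = (transpose_mat (e i) *\<^sub>v w) @\<^sub>v col (e i) q" for i
  define y where "y i = col (e i) q @\<^sub>v (transpose_mat (e i) *\<^sub>v w)" for i
  have xy: "x i \<bullet> y j = w \<bullet> col (e i * e j + e j * e i) q" if "i < k" "j < k" for i j
    unfolding x_def y_def using e[OF that(1)] e[OF that(2)] w q by (rule scalar_prod_anticommutator_pairing)
  show ?thesis
  proof (rule vec_space.card_le_dim_if_biorthogonal)
    show "x i \<in> carrier_vec (2 * n)" "y i \<in> carrier_vec (2 * n)" if "i \<in> ?I" for i
    proof -
      have "e i \<in> carrier_mat n n" using e that by simp
      then show "x i \<in> carrier_vec (2 * n)" "y i \<in> carrier_vec (2 * n)"
        using w q unfolding x_def y_def mult_2 by auto
    qed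
    show "x i \<bullet> y j = 0" if "i \<in> ?I" "j \<in> ?I" "i \<noteq> j" for i j
    proof -
      have ij: "i < k" "j < k" using that by auto
      have "e i * e j + e j * e i = 0\<^sub>m n n"
        using anti[OF ij \<open>i \<noteq> j\<close>] e[OF ij(1)] e[OF ij(2)] by simp
      then show ?thesis using xy[OF ij] w q by simp
    qed
    show "x i \<bullet> y i \<noteq> 0" if "i \<in> ?I" for i
    proof -
      have i: "i < k" using that by simp
      have "x i \<bullet> y i = w \<bullet> (col (e i * e i) q + col (e i * e i) q)"
        using xy[OF i i] col_add[OF mult_carrier_mat[OF e e] mult_carrier_mat[OF e e] q] i by simp
      also have "\<dots> = 2 * (w \<bullet> col (e i * e i) q)"
        using scalar_prod_add_distrib[OF w sq_col sq_col] i by (simp only: mult_2)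
      finally show ?thesis using w_nz[OF that] by simp
    qed
  qed
qed

theorem mainTheorem3:
  "\<exists>C::real. \<forall>(n::nat) (k::nat) (e::nat \<Rightarrow> complex mat).
     anticommuting n k e \<longrightarrow>
     real (\<Sum>i<k. vec_space.rank n (e i * e i)) \<le> C * real n ^ 2"
proof (intro exI[of _ 2] allI impI)
  fix n k :: nat and e :: "nat \<Rightarrow> complex mat"
  assume ac: "anticommuting n k e"
  let ?nz = "\<lambda>i q. col (e i * e i) q \<noteq> 0\<^sub>v n"
  have "(\<Sum>i<k. vec_space.rank n (e i * e i)) \<le> (\<Sum>i<k. card {q. q < n \<and> ?nz i q})"
    using anticommuting_carrier[OF ac]
    by (intro sum_mono vec_space.rank_le_card_nonzero_cols mult_carrier_mat) simp_all
  also have "\<dots> = (\<Sum>q<n. card {i. i < k \<and> ?nz i q})"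
    by (rule sum_card_filter_swap)
  also have "\<dots> \<le> (\<Sum>q<n. 2 * n)"
    using ac by (intro sum_mono anticommuting_card_nonzero_col_square_le) auto
  also have "\<dots> = 2 * n ^ 2"
    by (simp add: power2_eq_square)
  finally have "real (\<Sum>i<k. vec_space.rank n (e i * e i)) \<le> real (2 * n ^ 2)"
    by (rule of_nat_mono)
  then show "real (\<Sum>i<k. vec_space.rank n (e i * e i)) \<le> 2 * real n ^ 2"
    by simp
qed

end
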